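(* Assume the linear payoff assumption. Let $X=\begin{bmatrix}A(\nu^* )\\ B(\mu^* )\end{bmatrix}\in\mathbb{R}^{(m+n-2)\times d}$ and $y=\begin{bmatrix}c(\mu^* )\\ d(\nu^* )\end{bmatrix}$. Assume $X$ has full row rank and its smallest singular value satisfies $\sigma_{m+n-2}(X)\ge\sigma_b>0$. Let $\theta^*_{\min}=X^\dagger y$ be the minimum-norm solution of $X\theta=y$, where ${}^\dagger$ is the Moore–Penrose pseudoinverse. Let $(a^k,b^k)$, $k\le N$, be i.i.d. with $a^k\sim\mu^*$ and $b^k\sim\nu^*$ independent, and let $\widehat\mu,\widehat\nu$ be the empirical frequencies. Set $$\widehat\theta=\begin{bmatrix}A(\widehat\nu)\\ B(\widehat\mu)\end{bmatrix}^\dagger\begin{bmatrix}c(\widehat\mu)\\ d(\widehat\nu)\end{bmatrix}.$$ Then for every $\delta\in(0,1)$ there are $N_0$ and $C$ (depending on $\phi,\eta,\sigma_b,\mu^*,\nu^*,\delta$ but not on $N$) such that for $N\ge N_0$, with probability at least $1-\delta$, $$\|\widehat\theta-\theta^*_{\min}\|\le C\,\frac{m^2+n^2}{\sqrt N}.$$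
   Context: Let $m,n\ge 2$, $\mathcal A=\{1,\dots,m\}$, $\mathcal B=\{1,\dots,n\}$, and $\eta>0$. For a payoff matrix $Q\in\mathbb{R}^{m\times n}$, the entropy-regularized zero-sum matrix game is $$\max_{\mu\in\Delta(\mathcal A)}\min_{\nu\in\Delta(\mathcal B)}\ \mu^\top Q\nu+\eta^{-1}\mathcal H(\mu)-\eta^{-1}\mathcal H(\nu),\qquad \mathcal H(\pi)=-\sum_i\pi_i\log\pi_i .$$ Its unique saddle point, the quantal response equilibrium (QRE) $(\mu,\nu)$, is characterized by $$\mu(a)=\frac{\exp\big(\eta\sum_b Q(a,b)\nu(b)\big)}{\sum_{a'}\exp\big(\eta\sum_bQ(a',b)\nu(b)\big)},\qquad \nu(b)=\frac{\exp\big(-\eta\sum_a Q(a,b)\mu(a)\big)}{\sum_{b'}\exp\big(-\eta\sum_aQ(a,b')\mu(a)\big)}.$$ Linear payoff assumption: there are a feature map $\phi:\mathcal A\times\mathcal B\to\mathbb{R}^d$ and $\theta^*\in\mathbb{R}^d$ with $\|\theta^*\|^2\le M$ such that $Q(a,b)=\langle\phi(a,b),\theta^*\rangle$ for all $(a,b)$. $(\mu^*,\nu^* )$ denotes the QRE of this $Q$; all its entries are positive. For $\mu\in\Delta(\mathcal A)$ and $\nu\in\Delta(\mathcal B)$ with positive entries, define: - $A(\nu)\in\mathbb{R}^{(m-1)\times d}$, whose row indexed by $a=2,\dots,m$ is $\sum_{b}\nu(b)\,(\phi(a,b)-\phi(1,b))^\top$; - $B(\mu)\in\mathbb{R}^{(n-1)\times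 d}$, whose row indexed by $b=2,\dots,n$ is $\sum_a\mu(a)\,(\phi(a,b)-\phi(a,1))^\top$; - $c(\mu)=\big(\eta^{-1}\log(\mu(a)/\mu(1))\big)_{a=2}^m\in\mathbb{R}^{m-1}$; - $d(\nu)=\big(-\eta^{-1}\log(\nu(b)/\nu(1))\big)_{b=2}^n\in\mathbb{R}^{n-1}$. *)

theory Defs
  imports "HOL-Probability.Probability" "Jordan_Normal_Form.Matrix" "Jordan_Normal_Form.Char_Poly"
    "Jordan_Normal_Form.DL_Rank"
begin

text \<open>Actions are natural numbers: player 1 actions {1..m}, player 2 actions {1..n};
  the reference action is 1. Distributions/frequencies are functions nat => real.\<close>

definition vnorm :: "real vec \<Rightarrow> real" where
  "vnorm v = sqrt (v \<bullet> v)"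

definition is_QRE :: "nat \<Rightarrow> nat \<Rightarrow> real \<Rightarrow> (nat \<Rightarrow> nat \<Rightarrow> real) \<Rightarrow> (nat \<Rightarrow> real) \<Rightarrow> (nat \<Rightarrow> real) \<Rightarrow> bool" where
  "is_QRE m n \<eta> Q \<mu> \<nu> \<longleftrightarrow>
     (\<forall>a\<in>{1..m}. \<mu> a = exp (\<eta> * (\<Sum>b\<in>{1..n}. Q a b * \<nu> b)) /
                        (\<Sum>a'\<in>{1..m}. exp (\<eta> * (\<Sum>b\<in>{1..n}. Q a' b * \<nu> b)))) \<and>
     (\<forall>b\<in>{1..n}. \<nu> b = exp (- \<eta> * (\<Sum>a\<in>{1..m}. Q a b * \<mu> a)) /
                        (\<Sum>b'\<in>{1..n}. exp (- \<eta> * (\<Sum>a\<in>{1..m}. Q a b' * \<mu> a))))"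

text \<open>A(nu): (m-1) x d; row index i (0-based) corresponds to action a = i+2.\<close>
definition A_mat :: "nat \<Rightarrow> nat \<Rightarrow> nat \<Rightarrow> (nat \<Rightarrow> nat \<Rightarrow> real vec) \<Rightarrow> (nat \<Rightarrow> real) \<Rightarrow> real mat" where
  "A_mat m n d \<phi> \<nu> = mat (m - 1) d (\<lambda>(i, j). \<Sum>b\<in>{1..n}. \<nu> b * (\<phi> (i + 2) b $ j - \<phi> 1 b $ j))"

text \<open>B(mu): (n-1) x d; row index i (0-based) corresponds to action b = i+2.\<close>
definition B_mat :: "nat \<Rightarrow> nat \<Rightarrow> nat \<Rightarrow> (nat \<Rightarrow> nat \<Rightarrow> real vec) \<Rightarrow> (nat \<Rightarrow> real) \<Rightarrow> real mat" where
  "B_mat m n d \<phi> \<mu> = mat (n - 1) d (\<lambda>(i, j). \<Sum>a\<in>{1..m}. \<mu> a * (\<phi> a (i + 2) $ j - \<phi> a 1 $ j))"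

definition c_vec :: "nat \<Rightarrow> real \<Rightarrow> (nat \<Rightarrow> real) \<Rightarrow> real vec" where
  "c_vec m \<eta> \<mu> = vec (m - 1) (\<lambda>i. ln (\<mu> (i + 2) / \<mu> 1) / \<eta>)"

definition d_vec :: "nat \<Rightarrow> real \<Rightarrow> (nat \<Rightarrow> real) \<Rightarrow> real vec" where
  "d_vec n \<eta> \<nu> = vec (n - 1) (\<lambda>i. - ln (\<nu> (i + 2) / \<nu> 1) / \<eta>)"

definition stack_mat :: "'a mat \<Rightarrow> 'a mat \<Rightarrow> 'a mat" where
  "stack_mat X Y = mat (dim_row X + dim_row Y) (dim_col X)
     (\<lambda>(i, j). if i < dim_row X then X $$ (i, j) else Y $$ (i - dim_row X, j))"

text \<open>Moore--Penrose pseudoinverse (real matrices: conjugate transpose = transpose),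
  the unique matrix satisfying the four Penrose conditions.\<close>
definition pinv :: "real mat \<Rightarrow> real mat" where
  "pinv X = (THE Y. Y \<in> carrier_mat (dim_col X) (dim_row X) \<and>
       X * Y * X = X \<and> Y * X * Y = Y \<and>
       transpose_mat (X * Y) = X * Y \<and> transpose_mat (Y * X) = Y * X)"

definition full_row_rank :: "real mat \<Rightarrow> bool" where
  "full_row_rank X \<longleftrightarrow> vec_space.rank (dim_row X) X = dim_row X"

text \<open>Smallest singular value of a matrix with at most as many rows as columns:
  square root of the smallest eigenvalue of X X^T (the singular values of X are the square
  roots of the eigenvalues of X X^T).\<close>
definition sigma_min :: "real mat \<Rightarrow> real" where
  "sigma_min X = sqrt (Min {k. eigenvalue (X * transpose_mat X) k})"

definition emp_fst :: "nat \<Rightarrow> (nat \<Rightarrow> nat \<times> nat) \<Rightarrow> nat \<Rightarrow> real" where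
  "emp_fst N s a = real (card {k\<in>{..<N}. fst (s k) = a}) / real N"

definition emp_snd :: "nat \<Rightarrow> (nat \<Rightarrow> nat \<times> nat) \<Rightarrow> nat \<Rightarrow> real" where
  "emp_snd N s b = real (card {k\<in>{..<N}. snd (s k) = b}) / real N"

end

theory Submission
  imports Defs
begin

(* The estimator is a fixed map theta(mu, nu) = X(mu, nu)^+ y(mu, nu) evaluated at the empirical
   frequencies. Near the QRE the design matrix X has full row rank, so X^+ = X^T (X X^T)^-1, and
   a perturbation bound for the inverse of the Gram matrix X X^T makes X^+ y locally Lipschitz in
   (X, y). X depends linearly and y logarithmically on the frequencies, which stay bounded away
   from 0 near the QRE; hence theta is locally Lipschitz in the frequencies. By Hoeffding's
   inequality and a union bound over the m + n actions, all frequencies lie within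
   sqrt (ln (2 (m + n) / delta) / (2 N)) of the QRE with probability at least 1 - delta. *)

section \<open>Entrywise norms\<close>

(* Entrywise l1 norms: crude, but submultiplicative and dominating vnorm, which is all the
   Lipschitz estimates below need. *)
definition sum_abs_vec :: "real vec \<Rightarrow> real" where
  "sum_abs_vec v = (\<Sum>i<dim_vec v. \<bar>v $ i\<bar>)"

definition sum_abs_mat :: "real mat \<Rightarrow> real" where
  "sum_abs_mat A = (\<Sum>i<dim_row A. \<Sum>j<dim_col A. \<bar>A $$ (i, j)\<bar>)"

lemma sum_abs_vec_nonneg [simp]: "0 \<le> sum_abs_vec v"
  unfolding sum_abs_vec_def by (intro sum_nonneg) auto

lemma sum_abs_mat_nonneg [simp]: "0 \<le> sum_abs_mat A"
  unfolding sum_abs_mat_def by (intro sum_nonneg) auto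

lemma abs_index_le_sum_abs_vec: "i < dim_vec v \<Longrightarrow> \<bar>v $ i\<bar> \<le> sum_abs_vec v"
  unfolding sum_abs_vec_def by (rule member_le_sum) auto

lemma sum_abs_vec_le_0_imp_zero: "sum_abs_vec v \<le> 0 \<Longrightarrow> v = 0\<^sub>v (dim_vec v)"
  using abs_index_le_sum_abs_vec[of _ v] by (intro eq_vecI) force+

lemma vnorm_le_sum_abs_vec: "vnorm v \<le> sum_abs_vec v"
proof -
  have "v \<bullet> v = (\<Sum>i<dim_vec v. \<bar>v $ i\<bar> * \<bar>v $ i\<bar>)"
    by (simp add: scalar_prod_def atLeast0LessThan abs_mult[symmetric])
  also have "\<dots> \<le> (\<Sum>i<dim_vec v. \<bar>v $ i\<bar> * sum_abs_vec v)"
    by (intro sum_mono mult_left_mono abs_index_le_sum_abs_vec) auto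
  also have "\<dots> = (sum_abs_vec v)\<^sup>2"
    by (simp add: sum_abs_vec_def sum_distrib_right power2_eq_square)
  finally show ?thesis
    unfolding vnorm_def using sum_abs_vec_nonneg real_le_lsqrt by blast
qed

lemma sum_abs_vec_le_sum_abs_add:
  assumes "dim_vec w = dim_vec v" "dim_vec u = dim_vec v"
    and "\<And>i. i < dim_vec v \<Longrightarrow> \<bar>w $ i\<bar> \<le> \<bar>u $ i\<bar> + \<bar>v $ i\<bar>"
  shows "sum_abs_vec w \<le> sum_abs_vec u + sum_abs_vec v"
proof -
  have "sum_abs_vec w \<le> (\<Sum>i<dim_vec v. \<bar>u $ i\<bar> + \<bar>v $ i\<bar>)"
    unfolding sum_abs_vec_def assms(1) using assms(3) by (intro sum_mono) auto
  then show ?thesis unfolding sum_abs_vec_def using assms by (simp add: sum.distrib)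
qed

lemma sum_abs_mat_le_sum_abs_add:
  assumes "dim_row C = dim_row B" "dim_col C = dim_col B" "dim_row A = dim_row B" "dim_col A = dim_col B"
    and "\<And>i j. i < dim_row B \<Longrightarrow> j < dim_col B \<Longrightarrow> \<bar>C $$ (i, j)\<bar> \<le> \<bar>A $$ (i, j)\<bar> + \<bar>B $$ (i, j)\<bar>"
  shows "sum_abs_mat C \<le> sum_abs_mat A + sum_abs_mat B"
proof -
  have "sum_abs_mat C \<le> (\<Sum>i<dim_row B. \<Sum>j<dim_col B. \<bar>A $$ (i, j)\<bar> + \<bar>B $$ (i, j)\<bar>)"
    unfolding sum_abs_mat_def assms(1,2) using assms(5) by (intro sum_mono) auto
  then show ?thesis unfolding sum_abs_mat_def using assms by (simp add: sum.distrib)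
qed

lemma sum_abs_vec_add_le:
  "dim_vec u = dim_vec v \<Longrightarrow> sum_abs_vec (u + v) \<le> sum_abs_vec u + sum_abs_vec v"
  by (rule sum_abs_vec_le_sum_abs_add) auto

lemma sum_abs_vec_diff_le:
  "dim_vec u = dim_vec v \<Longrightarrow> sum_abs_vec (u - v) \<le> sum_abs_vec u + sum_abs_vec v"
  by (rule sum_abs_vec_le_sum_abs_add) auto

lemma sum_abs_vec_le_add_diff:
  "dim_vec u = dim_vec v \<Longrightarrow> sum_abs_vec u \<le> sum_abs_vec v + sum_abs_vec (u - v)"
  by (rule sum_abs_vec_le_sum_abs_add) auto

lemma sum_abs_mat_add_le:
  "dim_row A = dim_row B \<Longrightarrow> dim_col A = dim_col B \<Longrightarrow>
    sum_abs_mat (A + B) \<le> sum_abs_mat A + sum_abs_mat B"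
  by (rule sum_abs_mat_le_sum_abs_add) auto

lemma sum_abs_mat_le_add_diff:
  "dim_row A = dim_row B \<Longrightarrow> dim_col A = dim_col B \<Longrightarrow>
    sum_abs_mat A \<le> sum_abs_mat B + sum_abs_mat (A - B)"
  by (rule sum_abs_mat_le_sum_abs_add) auto

lemma sum_abs_transpose_mat [simp]: "sum_abs_mat (transpose_mat A) = sum_abs_mat A"
  unfolding sum_abs_mat_def by simp (rule sum.swap)

lemma sum_abs_mult_mat_vec_le:
  assumes "dim_col A = dim_vec v"
  shows "sum_abs_vec (A *\<^sub>v v) \<le> sum_abs_mat A * sum_abs_vec v"
proof -
  have "sum_abs_vec (A *\<^sub>v v) = (\<Sum>i<dim_row A. \<bar>\<Sum>j<dim_col A. A $$ (i, j) * v $ j\<bar>)"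
    unfolding sum_abs_vec_def using assms
    by (simp add: mult_mat_vec_def scalar_prod_def row_def atLeast0LessThan)
  also have "\<dots> \<le> (\<Sum>i<dim_row A. \<Sum>j<dim_col A. \<bar>A $$ (i, j)\<bar> * sum_abs_vec v)"
    using assms by (intro sum_mono order.trans[OF sum_abs])
      (auto simp: abs_mult intro: mult_left_mono abs_index_le_sum_abs_vec)
  also have "\<dots> = sum_abs_mat A * sum_abs_vec v"
    unfolding sum_abs_mat_def by (simp add: sum_distrib_right)
  finally show ?thesis .
qed

lemma sum_abs_mult_mat_le:
  assumes "dim_col A = dim_row B"
  shows "sum_abs_mat (A * B) \<le> sum_abs_mat A * sum_abs_mat B"
proof -
  have col: "sum_abs_vec (col B k) = (\<Sum>j<dim_row B. \<bar>B $$ (j, k)\<bar>)" if "k < dim_col B" for k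
    unfolding sum_abs_vec_def using that by (intro sum.cong) auto
  have "sum_abs_mat (A * B) = (\<Sum>i<dim_row A. \<Sum>k<dim_col B. \<bar>(A *\<^sub>v col B k) $ i\<bar>)"
    unfolding sum_abs_mat_def by (intro sum.cong) auto
  also have "\<dots> = (\<Sum>k<dim_col B. sum_abs_vec (A *\<^sub>v col B k))"
    unfolding sum_abs_vec_def by simp (rule sum.swap)
  also have "\<dots> \<le> (\<Sum>k<dim_col B. sum_abs_mat A * sum_abs_vec (col B k))"
    using assms by (intro sum_mono sum_abs_mult_mat_vec_le) simp
  also have "\<dots> = sum_abs_mat A * sum_abs_mat B"
    unfolding sum_abs_mat_def by (simp add: col sum_distrib_left) (rule sum.swap)
  finally show ?thesis .
qed

lemma sum_abs_vec_le_entrywise: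
  fixes v :: "real vec"
  assumes "v \<in> carrier_vec k" and "\<And>i. i < k \<Longrightarrow> \<bar>v $ i\<bar> \<le> c"
  shows "sum_abs_vec v \<le> real k * c"
proof -
  have dim: "dim_vec v = k" using assms(1) by simp
  have "sum_abs_vec v \<le> (\<Sum>i<k. c)" unfolding sum_abs_vec_def dim using assms(2) by (intro sum_mono) auto
  then show ?thesis by simp
qed

lemma sum_abs_mat_le_entrywise:
  fixes A :: "real mat"
  assumes "A \<in> carrier_mat k l" and "\<And>i j. i < k \<Longrightarrow> j < l \<Longrightarrow> \<bar>A $$ (i, j)\<bar> \<le> c"
  shows "sum_abs_mat A \<le> real k * real l * c"
proof -
  have dim: "dim_row A = k" "dim_col A = l" using assms(1) by auto
  have "sum_abs_mat A \<le> (\<Sum>i<k. \<Sum>j<l. c)"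
    unfolding sum_abs_mat_def dim using assms(2) by (intro sum_mono) auto
  then show ?thesis by simp
qed

section \<open>Pseudoinverse of a matrix of full row rank\<close>

lemma full_row_rank_transpose_kernel:
  fixes X :: "real mat"
  assumes X: "X \<in> carrier_mat r d" and rk: "vec_space.rank r X = r"
    and w: "w \<in> carrier_vec r" and ker: "transpose_mat X *\<^sub>v w = 0\<^sub>v d"
  shows "w = 0\<^sub>v r"
proof -
  interpret vec_space "TYPE(real)" r .
  obtain S where S: "maximal S (\<lambda>T. T \<subseteq> set (cols X) \<and> lin_indpt T)"
    using maximal_exists[of "\<lambda>T. T \<subseteq> set (cols X) \<and> lin_indpt T" "card (set (cols X))" "{}"]
    by (meson List.finite_set card_mono empty_iff empty_subsetI finite_lin_indpt2 rev_finite_subset)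
  have SX: "S \<subseteq> set (cols X)" and "lin_indpt S" using S by (auto simp: maximal_def)
  have SC: "S \<subseteq> carrier_vec r" using SX X cols_dim by blast
  have "card S = r" using rank_card_indpt[OF X S] rk by simp
  then have "basis S"
    using SX SC \<open>lin_indpt S\<close> by (intro dim_li_is_basis) (auto simp: dim_is_n intro: finite_subset)
  then have span: "span S = carrier_vec r" by (simp add: basis_def)
  have "w \<bullet> x = 0" if "x \<in> S" for x
  proof -
    from that SX obtain j where j: "j < dim_col X" "x = col X j" by (auto simp: cols_def)
    have "col X j \<bullet> w = 0" using arg_cong[OF ker, of "\<lambda>v. v $ j"] j X by simp
    then show ?thesis using j comm_scalar_prod[of w r "col X j"] w X by auto
  qed
  then have "w \<in> orthogonal_complement S" using w by (simp add: orthogonal_complement_def)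
  then have "w \<in> orthogonal_complement (span S)" using SC by simp
  then have "w \<bullet> w = 0" using w by (simp add: span orthogonal_complement_def)
  then show ?thesis using conjugate_square_eq_0_vec[OF w] by simp
qed

lemma full_row_rank_gram_kernel:
  fixes X :: "real mat"
  assumes X: "X \<in> carrier_mat r d" and rk: "vec_space.rank r X = r"
    and v: "v \<in> carrier_vec r" and ker: "(X * transpose_mat X) *\<^sub>v v = 0\<^sub>v r"
  shows "v = 0\<^sub>v r"
proof (rule full_row_rank_transpose_kernel[OF X rk v])
  have u: "transpose_mat X *\<^sub>v v \<in> carrier_vec d" using X v by simp
  have "(transpose_mat X *\<^sub>v v) \<bullet> (transpose_mat X *\<^sub>v v) = v \<bullet> (X *\<^sub>v (transpose_mat X *\<^sub>v v))"
    by (rule transpose_vec_mult_scalar[OF X u v])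
  also have "\<dots> = 0" using ker X v by (simp flip: assoc_mult_mat_vec)
  finally show "transpose_mat X *\<^sub>v v = 0\<^sub>v d" using conjugate_square_eq_0_vec[OF u] by simp
qed

lemma square_mat_inverse_if_kernel_trivial:
  fixes P :: "real mat"
  assumes P: "P \<in> carrier_mat r r" and "\<And>v. v \<in> carrier_vec r \<Longrightarrow> P *\<^sub>v v = 0\<^sub>v r \<Longrightarrow> v = 0\<^sub>v r"
  obtains W where "W \<in> carrier_mat r r" "W * P = 1\<^sub>m r" "P * W = 1\<^sub>m r"
proof -
  have "det P \<noteq> 0" using assms det_0_iff_vec_prod_zero[OF P] by blast
  then have "P \<in> Units (ring_mat TYPE(real) r undefined)" by (rule det_non_zero_imp_unit[OF P])
  then show ?thesis using that by (auto simp: Units_def ring_mat_def)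
qed

lemma inverse_of_symmetric_mat_symmetric:
  fixes P W :: "real mat"
  assumes P: "P \<in> carrier_mat r r" and W: "W \<in> carrier_mat r r"
    and sym: "transpose_mat P = P" and PW: "P * W = 1\<^sub>m r"
  shows "transpose_mat W = W"
proof -
  have WTP: "transpose_mat W * P = 1\<^sub>m r"
    using arg_cong[OF PW, of transpose_mat] transpose_mult[OF P W] sym by simp
  have "transpose_mat W = transpose_mat W * (P * W)" using PW W by simp
  also have "\<dots> = (transpose_mat W * P) * W" using P W by (simp add: assoc_mult_mat)
  also have "\<dots> = W" using WTP W by simp
  finally show ?thesis .
qed

lemma pinv_eq_transpose_mult_inverse:
  fixes X W :: "real mat"
  assumes X: "X \<in> carrier_mat r d" and W: "W \<in> carrier_mat r r"
    and PW: "(X * transpose_mat X) * W = 1\<^sub>m r"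
  shows "pinv X = transpose_mat X * W"
proof -
  let ?P = "X * transpose_mat X" and ?Y = "transpose_mat X * W"
  have XT: "transpose_mat X \<in> carrier_mat d r" using X by simp
  have P: "?P \<in> carrier_mat r r" and Y: "?Y \<in> carrier_mat d r" using X W by auto
  have Wsym: "transpose_mat W = W"
    using inverse_of_symmetric_mat_symmetric[OF P W _ PW] transpose_mult[OF X XT] by simp
  have XY: "X * ?Y = 1\<^sub>m r" using PW X XT W by (simp flip: assoc_mult_mat)
  have YXsym: "transpose_mat (?Y * X) = ?Y * X"
    using transpose_mult[OF Y X] transpose_mult[OF XT W] Wsym X XT W by simp
  have unique: "Y' = ?Y" if Y': "Y' \<in> carrier_mat d r" and "X * Y' * X = X"
    and "transpose_mat (Y' * X) = Y' * X" for Y'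
  proof -
    have "Y' = (Y' * X) * transpose_mat X * W"
      using PW Y' X XT W by (simp add: assoc_mult_mat[of _ d r _ r _ r])
    also have "(Y' * X) * transpose_mat X = transpose_mat (X * (Y' * X))"
      using that transpose_mult[OF X, of "Y' * X" d] Y' X by simp
    also have "X * (Y' * X) = X" using that X Y' by simp
    finally show ?thesis .
  qed
  show ?thesis unfolding pinv_def
  proof (rule the_equality)
    show "?Y \<in> carrier_mat (dim_col X) (dim_row X) \<and> X * ?Y * X = X \<and> ?Y * X * ?Y = ?Y \<and>
        transpose_mat (X * ?Y) = X * ?Y \<and> transpose_mat (?Y * X) = ?Y * X"
      using XY YXsym X Y by (simp add: assoc_mult_mat[OF Y X Y] right_mult_one_mat[OF Y])
  qed (use unique X in auto)
qed

section \<open>Perturbation of the minimum-norm solution\<close>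

lemma sum_abs_gram_mat_diff_le:
  fixes X X0 :: "real mat"
  assumes X: "X \<in> carrier_mat r d" and X0: "X0 \<in> carrier_mat r d"
  shows "sum_abs_mat (X * transpose_mat X - X0 * transpose_mat X0)
    \<le> (2 * sum_abs_mat X0 + sum_abs_mat (X - X0)) * sum_abs_mat (X - X0)"
proof -
  have XT: "transpose_mat X \<in> carrier_mat d r" and X0T: "transpose_mat X0 \<in> carrier_mat d r"
    using X X0 by auto
  have "(X - X0) * transpose_mat X = X * transpose_mat X - X0 * transpose_mat X"
    by (rule minus_mult_distrib_mat[OF X X0 XT])
  moreover have "X0 * transpose_mat (X - X0) = X0 * transpose_mat X - X0 * transpose_mat X0"
    using transpose_minus[OF X X0] mult_minus_distrib_mat[OF X0 XT X0T] by simp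
  ultimately have split: "X * transpose_mat X - X0 * transpose_mat X0
      = (X - X0) * transpose_mat X + X0 * transpose_mat (X - X0)"
    using X X0 by (intro eq_matI) auto
  have "sum_abs_mat (X * transpose_mat X - X0 * transpose_mat X0)
      \<le> sum_abs_mat (X - X0) * sum_abs_mat X + sum_abs_mat X0 * sum_abs_mat (X - X0)"
    unfolding split using X X0
    by (intro order.trans[OF sum_abs_mat_add_le] add_mono sum_abs_mult_mat_le
        order.trans[OF sum_abs_mult_mat_le]) auto
  also have "\<dots> \<le> sum_abs_mat (X - X0) * (sum_abs_mat X0 + sum_abs_mat (X - X0))
      + sum_abs_mat X0 * sum_abs_mat (X - X0)"
    using sum_abs_mat_le_add_diff[of X X0] X X0 by (intro add_mono mult_left_mono) auto
  finally show ?thesis by (simp add: algebra_simps)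
qed

lemma sum_abs_transpose_mult_vec_diff_le:
  fixes X X0 :: "real mat"
  assumes X: "X \<in> carrier_mat r d" and X0: "X0 \<in> carrier_mat r d"
    and w: "w \<in> carrier_vec r" and w0: "w0 \<in> carrier_vec r"
  shows "sum_abs_vec (transpose_mat X *\<^sub>v w - transpose_mat X0 *\<^sub>v w0)
    \<le> sum_abs_mat (X - X0) * sum_abs_vec w + sum_abs_mat X0 * sum_abs_vec (w - w0)"
proof -
  have XT: "transpose_mat X \<in> carrier_mat d r" and X0T: "transpose_mat X0 \<in> carrier_mat d r"
    using X X0 by auto
  have "transpose_mat (X - X0) *\<^sub>v w = transpose_mat X *\<^sub>v w - transpose_mat X0 *\<^sub>v w"
    using transpose_minus[OF X X0] minus_mult_distrib_mat_vec[OF XT X0T w] by simp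
  moreover have "transpose_mat X0 *\<^sub>v (w - w0) = transpose_mat X0 *\<^sub>v w - transpose_mat X0 *\<^sub>v w0"
    by (rule mult_minus_distrib_mat_vec[OF X0T w w0])
  ultimately have split: "transpose_mat X *\<^sub>v w - transpose_mat X0 *\<^sub>v w0
      = transpose_mat (X - X0) *\<^sub>v w + transpose_mat X0 *\<^sub>v (w - w0)"
    using XT X0T w w0 by (intro eq_vecI) auto
  show ?thesis unfolding split using X X0 w w0
    by (intro order.trans[OF sum_abs_vec_add_le] add_mono order.trans[OF sum_abs_mult_mat_vec_le]) auto
qed

(* From w - w0 = W0 ((P w - P0 w0) - (P - P0) w); the resulting term in |w| is absorbed into the
   left-hand side because |W0| |P - P0| <= 1/2. *)
lemma sum_abs_solution_diff_le:
  fixes P P0 W0 :: "real mat"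
  assumes P: "P \<in> carrier_mat r r" and P0: "P0 \<in> carrier_mat r r" and W0: "W0 \<in> carrier_mat r r"
    and inv: "W0 * P0 = 1\<^sub>m r" and small: "sum_abs_mat W0 * sum_abs_mat (P - P0) \<le> 1/2"
    and w: "w \<in> carrier_vec r" and w0: "w0 \<in> carrier_vec r"
  shows "sum_abs_vec (w - w0)
    \<le> 2 * sum_abs_mat W0 * (sum_abs_mat (P - P0) * sum_abs_vec w0 + sum_abs_vec (P *\<^sub>v w - P0 *\<^sub>v w0))"
proof -
  let ?K = "sum_abs_mat W0" and ?D = "sum_abs_mat (P - P0)" and ?R = "P *\<^sub>v w - P0 *\<^sub>v w0"
  have "P0 *\<^sub>v (w - w0) = ?R - (P - P0) *\<^sub>v w"
    using mult_minus_distrib_mat_vec[OF P0 w w0] minus_mult_distrib_mat_vec[OF P P0 w] P P0 w w0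
    by (intro eq_vecI) auto
  then have "w - w0 = W0 *\<^sub>v (?R - (P - P0) *\<^sub>v w)"
    using assoc_mult_mat_vec[OF W0 P0, of "w - w0"] inv w w0 by simp
  then have "sum_abs_vec (w - w0) \<le> ?K * (sum_abs_vec ?R + ?D * sum_abs_vec w)"
    using W0 P P0 w w0
    by (auto intro!: order.trans[OF sum_abs_mult_mat_vec_le] mult_left_mono
        order.trans[OF sum_abs_vec_diff_le] add_mono sum_abs_mult_mat_vec_le)
  also have "\<dots> \<le> ?K * (sum_abs_vec ?R + ?D * (sum_abs_vec w0 + sum_abs_vec (w - w0)))"
    using sum_abs_vec_le_add_diff[of w w0] w w0 by (intro mult_left_mono add_left_mono) auto
  also have "\<dots> = ?K * (sum_abs_vec ?R + ?D * sum_abs_vec w0) + (?K * ?D) * sum_abs_vec (w - w0)"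
    by (simp add: algebra_simps)
  also have "\<dots> \<le> ?K * (sum_abs_vec ?R + ?D * sum_abs_vec w0) + 1/2 * sum_abs_vec (w - w0)"
    using small by (intro add_left_mono mult_right_mono) auto
  finally show ?thesis by (simp add: algebra_simps)
qed

lemma kernel_trivial_near_invertible:
  fixes P P0 W0 :: "real mat"
  assumes "P \<in> carrier_mat r r" "P0 \<in> carrier_mat r r" "W0 \<in> carrier_mat r r"
    and "W0 * P0 = 1\<^sub>m r" "sum_abs_mat W0 * sum_abs_mat (P - P0) \<le> 1/2"
    and v: "v \<in> carrier_vec r" and ker: "P *\<^sub>v v = 0\<^sub>v r"
  shows "v = 0\<^sub>v r"
proof -
  have "sum_abs_vec (v - 0\<^sub>v r) \<le> 0"
    using sum_abs_solution_diff_le[OF assms(1-5) v zero_carrier_vec] ker assms(2)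
    by (simp add: sum_abs_vec_def)
  then show ?thesis using sum_abs_vec_le_0_imp_zero[of "v - 0\<^sub>v r"] v by simp
qed

lemma pinv_mult_vec_via_gram_solution:
  fixes X :: "real mat"
  assumes X: "X \<in> carrier_mat r d" and y: "y \<in> carrier_vec r"
    and ker: "\<And>v. v \<in> carrier_vec r \<Longrightarrow> (X * transpose_mat X) *\<^sub>v v = 0\<^sub>v r \<Longrightarrow> v = 0\<^sub>v r"
  obtains w where "w \<in> carrier_vec r" "(X * transpose_mat X) *\<^sub>v w = y"
    "pinv X *\<^sub>v y = transpose_mat X *\<^sub>v w"
proof -
  have P: "X * transpose_mat X \<in> carrier_mat r r" using X by simp
  obtain W where W: "W \<in> carrier_mat r r" "(X * transpose_mat X) * W = 1\<^sub>m r"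
    using square_mat_inverse_if_kernel_trivial[OF P ker] by blast
  show ?thesis
  proof (rule that[of "W *\<^sub>v y"])
    show "W *\<^sub>v y \<in> carrier_vec r" using W y by simp
    show "(X * transpose_mat X) *\<^sub>v (W *\<^sub>v y) = y"
      using W P y by (simp flip: assoc_mult_mat_vec)
    show "pinv X *\<^sub>v y = transpose_mat X *\<^sub>v (W *\<^sub>v y)"
      using pinv_eq_transpose_mult_inverse[OF X W] X W y by simp
  qed
qed

lemma gram_solution_perturbation:
  fixes X X0 W0 :: "real mat"
  assumes X: "X \<in> carrier_mat r d" and X0: "X0 \<in> carrier_mat r d" and W0: "W0 \<in> carrier_mat r r"
    and inv: "W0 * (X0 * transpose_mat X0) = 1\<^sub>m r"
    and close: "sum_abs_mat (X - X0) \<le> 1"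
      "2 * sum_abs_mat W0 * (2 * sum_abs_mat X0 + 1) * sum_abs_mat (X - X0) \<le> 1"
    and y: "y \<in> carrier_vec r" and w0: "w0 \<in> carrier_vec r"
  obtains w where "w \<in> carrier_vec r" "pinv X *\<^sub>v y = transpose_mat X *\<^sub>v w"
    "sum_abs_vec (w - w0) \<le> 2 * sum_abs_mat W0 * ((2 * sum_abs_mat X0 + 1) * sum_abs_mat (X - X0)
      * sum_abs_vec w0 + sum_abs_vec (y - (X0 * transpose_mat X0) *\<^sub>v w0))"
proof -
  define P where "P = X * transpose_mat X"
  define P0 where "P0 = X0 * transpose_mat X0"
  let ?K = "sum_abs_mat W0" and ?c = "2 * sum_abs_mat X0 + 1" and ?e = "sum_abs_mat (X - X0)"
  have P: "P \<in> carrier_mat r r" and P0: "P0 \<in> carrier_mat r r"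
    unfolding P_def P0_def using X X0 by auto
  have "(2 * sum_abs_mat X0 + ?e) * ?e \<le> ?c * ?e" using close(1) by (intro mult_right_mono) auto
  then have D: "sum_abs_mat (P - P0) \<le> ?c * ?e"
    using sum_abs_gram_mat_diff_le[OF X X0] unfolding P_def P0_def by linarith
  have small: "?K * sum_abs_mat (P - P0) \<le> 1/2"
    using mult_left_mono[OF D, of ?K] close(2) by (simp add: algebra_simps)
  obtain w where w: "w \<in> carrier_vec r" "P *\<^sub>v w = y" "pinv X *\<^sub>v y = transpose_mat X *\<^sub>v w"
    using pinv_mult_vec_via_gram_solution[OF X y]
      kernel_trivial_near_invertible[OF P P0 W0 inv[folded P0_def] small]
    unfolding P_def by blast
  have "sum_abs_vec (w - w0) \<le> 2 * ?K * (sum_abs_mat (P - P0) * sum_abs_vec w0 + sum_abs_vec (y - P0 *\<^sub>v w0))"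
    using sum_abs_solution_diff_le[OF P P0 W0 inv[folded P0_def] small w(1) w0] w(2) by simp
  also have "\<dots> \<le> 2 * ?K * (?c * ?e * sum_abs_vec w0 + sum_abs_vec (y - P0 *\<^sub>v w0))"
    using D by (intro mult_left_mono add_right_mono mult_right_mono) auto
  finally show ?thesis using that w(1,3) unfolding P0_def by blast
qed

lemma pinv_mult_vec_locally_lipschitz:
  fixes X0 :: "real mat"
  assumes X0: "X0 \<in> carrier_mat r d" and rk: "vec_space.rank r X0 = r" and y0: "y0 \<in> carrier_vec r"
  obtains e0 L where "e0 > 0" "L \<ge> 0"
    "\<And>X y. X \<in> carrier_mat r d \<Longrightarrow> y \<in> carrier_vec r \<Longrightarrow> sum_abs_mat (X - X0) \<le> e0 \<Longrightarrow>
       sum_abs_vec (pinv X *\<^sub>v y - pinv X0 *\<^sub>v y0) \<le> L * (sum_abs_mat (X - X0) + sum_abs_vec (y - y0))"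
proof -
  have P0: "X0 * transpose_mat X0 \<in> carrier_mat r r" using X0 by simp
  obtain W0 where W0: "W0 \<in> carrier_mat r r" "W0 * (X0 * transpose_mat X0) = 1\<^sub>m r"
    using square_mat_inverse_if_kernel_trivial[OF P0] full_row_rank_gram_kernel[OF X0 rk] by blast
  obtain w0 where w0: "w0 \<in> carrier_vec r" "(X0 * transpose_mat X0) *\<^sub>v w0 = y0"
    "pinv X0 *\<^sub>v y0 = transpose_mat X0 *\<^sub>v w0"
    using pinv_mult_vec_via_gram_solution[OF X0 y0] full_row_rank_gram_kernel[OF X0 rk] by blast
  define K where "K = sum_abs_mat W0"
  define c where "c = 2 * sum_abs_mat X0 + 1"
  define A where "A = sum_abs_vec w0 + 2 * (1 + sum_abs_mat X0) * K * c * sum_abs_vec w0"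
  define B where "B = 2 * (1 + sum_abs_mat X0) * K"
  have K: "K \<ge> 0" and c: "c \<ge> 1" and A: "A \<ge> 0" and B: "B \<ge> 0"
    by (auto simp: K_def c_def A_def B_def)
  define e0 where "e0 = min 1 (1 / (2 * K * c + 1))"
  have "e0 > 0" unfolding e0_def using K c by (simp add: add_nonneg_pos)
  moreover have "sum_abs_vec (pinv X *\<^sub>v y - pinv X0 *\<^sub>v y0)
      \<le> (A + B) * (sum_abs_mat (X - X0) + sum_abs_vec (y - y0))"
    if X: "X \<in> carrier_mat r d" and y: "y \<in> carrier_vec r" and close: "sum_abs_mat (X - X0) \<le> e0"
    for X y
  proof -
    define e where "e = sum_abs_mat (X - X0)"
    define f where "f = sum_abs_vec (y - y0)"
    have e: "0 \<le> e" "e \<le> 1" "e \<le> 1 / (2 * K * c + 1)"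
      using close unfolding e_def e0_def by auto
    then have "e * (2 * K * c + 1) \<le> 1" using K c by (simp add: pos_le_divide_eq add_nonneg_pos)
    then have "2 * K * c * e \<le> 1" using e(1) by (simp add: algebra_simps)
    then obtain w where w: "w \<in> carrier_vec r" "pinv X *\<^sub>v y = transpose_mat X *\<^sub>v w"
      and dw: "sum_abs_vec (w - w0) \<le> 2 * K * (c * e * sum_abs_vec w0 + f)"
      using gram_solution_perturbation[OF X X0 W0(1,2) _ _ y w0(1)] e(2) w0(2)
      unfolding K_def c_def e_def f_def by (auto simp: algebra_simps)
    have "sum_abs_vec (pinv X *\<^sub>v y - pinv X0 *\<^sub>v y0)
        \<le> e * sum_abs_vec w + sum_abs_mat X0 * sum_abs_vec (w - w0)"
      unfolding w(2) w0(3) e_def by (rule sum_abs_transpose_mult_vec_diff_le[OF X X0 w(1) w0(1)])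
    also have "\<dots> \<le> e * sum_abs_vec w0 + (1 + sum_abs_mat X0) * sum_abs_vec (w - w0)"
    proof -
      have "e * sum_abs_vec w \<le> e * sum_abs_vec w0 + e * sum_abs_vec (w - w0)"
        using mult_left_mono[OF sum_abs_vec_le_add_diff[of w w0] e(1)] w(1) w0(1)
        by (simp add: distrib_left)
      moreover have "e * sum_abs_vec (w - w0) \<le> sum_abs_vec (w - w0)"
        using e by (simp add: mult_left_le_one_le)
      ultimately show ?thesis by (simp add: algebra_simps)
    qed
    also have "\<dots> \<le> e * sum_abs_vec w0 + (1 + sum_abs_mat X0) * (2 * K * (c * e * sum_abs_vec w0 + f))"
      using dw by (intro add_left_mono mult_left_mono) auto
    also have "\<dots> = e * A + f * B" by (simp add: A_def B_def algebra_simps)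
    also have "\<dots> \<le> (A + B) * (e + f)"
      using A B e f_def by (simp add: algebra_simps add_increasing2 mult_left_mono)
    finally show ?thesis unfolding e_def f_def .
  qed
  ultimately show ?thesis using that[of e0 "A + B"] A B by auto
qed

section \<open>Dependence on the action frequencies\<close>

definition design_mat ::
  "nat \<Rightarrow> nat \<Rightarrow> nat \<Rightarrow> (nat \<Rightarrow> nat \<Rightarrow> real vec) \<Rightarrow> (nat \<Rightarrow> real) \<Rightarrow> (nat \<Rightarrow> real) \<Rightarrow> real mat" where
  "design_mat m n d \<phi> \<mu> \<nu> = stack_mat (A_mat m n d \<phi> \<nu>) (B_mat m n d \<phi> \<mu>)"

definition log_odds_vec :: "nat \<Rightarrow> nat \<Rightarrow> real \<Rightarrow> (nat \<Rightarrow> real) \<Rightarrow> (nat \<Rightarrow> real) \<Rightarrow> real vec" where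
  "log_odds_vec m n \<eta> \<mu> \<nu> = c_vec m \<eta> \<mu> @\<^sub>v d_vec n \<eta> \<nu>"

definition min_norm_theta ::
  "nat \<Rightarrow> nat \<Rightarrow> nat \<Rightarrow> real \<Rightarrow> (nat \<Rightarrow> nat \<Rightarrow> real vec) \<Rightarrow> (nat \<Rightarrow> real) \<Rightarrow> (nat \<Rightarrow> real) \<Rightarrow> real vec"
  where "min_norm_theta m n d \<eta> \<phi> \<mu> \<nu> = pinv (design_mat m n d \<phi> \<mu> \<nu>) *\<^sub>v log_odds_vec m n \<eta> \<mu> \<nu>"

lemma design_mat_carrier: "design_mat m n d \<phi> \<mu> \<nu> \<in> carrier_mat (m - 1 + (n - 1)) d"
  by (simp add: design_mat_def stack_mat_def A_mat_def B_mat_def)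

lemma log_odds_vec_carrier: "log_odds_vec m n \<eta> \<mu> \<nu> \<in> carrier_vec (m - 1 + (n - 1))"
  unfolding log_odds_vec_def by (intro append_carrier_vec) (auto simp: c_vec_def d_vec_def)

lemma abs_sum_mult_diff_le:
  assumes "\<And>b. b \<in> S \<Longrightarrow> \<bar>\<nu> b - \<nu>' b\<bar> \<le> t" and "\<And>b. b \<in> S \<Longrightarrow> \<bar>D b\<bar> \<le> c"
  shows "\<bar>(\<Sum>b\<in>S. \<nu> b * D b) - (\<Sum>b\<in>S. \<nu>' b * D b)\<bar> \<le> real (card S) * (t * c)"
proof -
  have "\<bar>(\<Sum>b\<in>S. \<nu> b * D b) - (\<Sum>b\<in>S. \<nu>' b * D b)\<bar> \<le> (\<Sum>b\<in>S. \<bar>(\<nu> b - \<nu>' b) * D b\<bar>)"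
    by (simp add: sum_subtractf[symmetric] left_diff_distrib sum_abs)
  also have "\<dots> \<le> (\<Sum>b\<in>S. t * c)"
    using assms by (intro sum_mono) (auto simp: abs_mult intro: mult_mono order.trans[OF abs_ge_zero])
  finally show ?thesis by simp
qed

lemma sum_abs_design_mat_diff_le:
  fixes \<phi> :: "nat \<Rightarrow> nat \<Rightarrow> real vec"
  assumes t: "0 \<le> t" and F: "0 \<le> F"
    and \<phi>: "\<And>a b j. a \<in> {1..m} \<Longrightarrow> b \<in> {1..n} \<Longrightarrow> j < d \<Longrightarrow> \<bar>\<phi> a b $ j\<bar> \<le> F"
    and \<mu>: "\<And>a. a \<in> {1..m} \<Longrightarrow> \<bar>\<mu> a - \<mu>' a\<bar> \<le> t"
    and \<nu>: "\<And>b. b \<in> {1..n} \<Longrightarrow> \<bar>\<nu> b - \<nu>' b\<bar> \<le> t"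
  shows "sum_abs_mat (design_mat m n d \<phi> \<mu> \<nu> - design_mat m n d \<phi> \<mu>' \<nu>')
    \<le> real (m - 1 + (n - 1)) * real d * (real (m + n) * (t * (2 * F)))"
proof (rule sum_abs_mat_le_entrywise)
  show "design_mat m n d \<phi> \<mu> \<nu> - design_mat m n d \<phi> \<mu>' \<nu>' \<in> carrier_mat (m - 1 + (n - 1)) d"
    using design_mat_carrier by (rule minus_carrier_mat)
  fix i j assume i: "i < m - 1 + (n - 1)" and j: "j < d"
  let ?entry = "(design_mat m n d \<phi> \<mu> \<nu> - design_mat m n d \<phi> \<mu>' \<nu>') $$ (i, j)"
  show "\<bar>?entry\<bar> \<le> real (m + n) * (t * (2 * F))"
  proof (cases "i < m - 1")
    case True
    let ?D = "\<lambda>b. \<phi> (i + 2) b $ j - \<phi> 1 b $ j"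
    have "?entry = (\<Sum>b\<in>{1..n}. \<nu> b * ?D b) - (\<Sum>b\<in>{1..n}. \<nu>' b * ?D b)"
      using i j True design_mat_carrier[of m n d \<phi> \<mu>' \<nu>']
      by (simp add: design_mat_def stack_mat_def A_mat_def B_mat_def)
    also have "\<bar>\<dots>\<bar> \<le> real (card {1..n}) * (t * (2 * F))"
    proof (rule abs_sum_mult_diff_le[OF \<nu>])
      fix b assume "b \<in> {1..n}"
      then have "\<bar>\<phi> (i + 2) b $ j\<bar> \<le> F" "\<bar>\<phi> 1 b $ j\<bar> \<le> F" using True j \<phi> by auto
      then show "\<bar>?D b\<bar> \<le> 2 * F" using abs_triangle_ineq4[of "\<phi> (i + 2) b $ j" "\<phi> 1 b $ j"] by linarith
    qed
    also have "\<dots> \<le> real (m + n) * (t * (2 * F))" using t F by (intro mult_right_mono) auto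
    finally show ?thesis .
  next
    case False
    let ?D = "\<lambda>a. \<phi> a (i - (m - 1) + 2) $ j - \<phi> a 1 $ j"
    have "?entry = (\<Sum>a\<in>{1..m}. \<mu> a * ?D a) - (\<Sum>a\<in>{1..m}. \<mu>' a * ?D a)"
      using i j False design_mat_carrier[of m n d \<phi> \<mu>' \<nu>']
      by (simp add: design_mat_def stack_mat_def A_mat_def B_mat_def)
    also have "\<bar>\<dots>\<bar> \<le> real (card {1..m}) * (t * (2 * F))"
    proof (rule abs_sum_mult_diff_le[OF \<mu>])
      fix a assume "a \<in> {1..m}"
      then have "\<bar>\<phi> a (i - (m - 1) + 2) $ j\<bar> \<le> F" "\<bar>\<phi> a 1 $ j\<bar> \<le> F" using False i j \<phi> by auto
      then show "\<bar>?D a\<bar> \<le> 2 * F"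
        using abs_triangle_ineq4[of "\<phi> a (i - (m - 1) + 2) $ j" "\<phi> a 1 $ j"] by linarith
    qed
    also have "\<dots> \<le> real (m + n) * (t * (2 * F))" using t F by (intro mult_right_mono) auto
    finally show ?thesis .
  qed
qed

lemma abs_ln_diff_le:
  fixes x x' q :: real
  assumes "0 < q" "q \<le> x" "q \<le> x'"
  shows "\<bar>ln x - ln x'\<bar> \<le> \<bar>x - x'\<bar> / q"
proof -
  have one_side: "ln u - ln v \<le> \<bar>u - v\<bar> / q" if "q \<le> u" "q \<le> v" for u v
  proof -
    have "ln u - ln v = ln (u / v)" using that assms by (simp add: ln_div)
    also have "\<dots> \<le> u / v - 1" using that assms by (intro ln_le_minus_one) auto
    also have "\<dots> = (u - v) / v" using that assms by (simp add: field_simps)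
    also have "\<dots> \<le> \<bar>u - v\<bar> / q" using that assms by (intro frac_le) auto
    finally show ?thesis .
  qed
  show ?thesis using one_side[of x x'] one_side[of x' x] assms by (simp add: abs_minus_commute)
qed

lemma abs_ln_div_diff_le:
  fixes x1 x2 y1 y2 p t :: real
  assumes p: "0 < p" and t: "t \<le> p / 2" and y: "p \<le> y1" "p \<le> y2"
    and x: "\<bar>x1 - y1\<bar> \<le> t" "\<bar>x2 - y2\<bar> \<le> t"
  shows "\<bar>ln (x1 / x2) - ln (y1 / y2)\<bar> \<le> 4 * t / p"
proof -
  have "p / 2 \<le> x1" "p / 2 \<le> x2" using t y x by linarith+
  then have "ln (x1 / x2) - ln (y1 / y2) = (ln x1 - ln y1) - (ln x2 - ln y2)"
    using p y by (simp add: ln_div)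
  also have "\<bar>\<dots>\<bar> \<le> \<bar>x1 - y1\<bar> / (p / 2) + \<bar>x2 - y2\<bar> / (p / 2)"
    using \<open>p / 2 \<le> x1\<close> \<open>p / 2 \<le> x2\<close> p y
    by (intro order.trans[OF abs_triangle_ineq4] add_mono abs_ln_diff_le) auto
  also have "\<dots> \<le> t / (p / 2) + t / (p / 2)" using x p by (intro add_mono divide_right_mono) auto
  finally show ?thesis by (simp add: field_simps)
qed

lemma sum_abs_log_odds_vec_diff_le:
  assumes \<eta>: "0 < \<eta>" and p: "0 < p" and t: "t \<le> p / 2"
    and \<mu>': "\<And>a. a \<in> {1..m} \<Longrightarrow> p \<le> \<mu>' a" and \<nu>': "\<And>b. b \<in> {1..n} \<Longrightarrow> p \<le> \<nu>' b"
    and \<mu>: "\<And>a. a \<in> {1..m} \<Longrightarrow> \<bar>\<mu> a - \<mu>' a\<bar> \<le> t"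
    and \<nu>: "\<And>b. b \<in> {1..n} \<Longrightarrow> \<bar>\<nu> b - \<nu>' b\<bar> \<le> t"
  shows "sum_abs_vec (log_odds_vec m n \<eta> \<mu> \<nu> - log_odds_vec m n \<eta> \<mu>' \<nu>')
    \<le> real (m - 1 + (n - 1)) * (4 * t / p / \<eta>)"
proof (rule sum_abs_vec_le_entrywise)
  show "log_odds_vec m n \<eta> \<mu> \<nu> - log_odds_vec m n \<eta> \<mu>' \<nu>' \<in> carrier_vec (m - 1 + (n - 1))"
    by (intro minus_carrier_vec log_odds_vec_carrier)
  fix i assume i: "i < m - 1 + (n - 1)"
  let ?entry = "(log_odds_vec m n \<eta> \<mu> \<nu> - log_odds_vec m n \<eta> \<mu>' \<nu>') $ i"
  show "\<bar>?entry\<bar> \<le> 4 * t / p / \<eta>"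
  proof (cases "i < m - 1")
    case True
    have "?entry = (ln (\<mu> (i + 2) / \<mu> 1) - ln (\<mu>' (i + 2) / \<mu>' 1)) / \<eta>"
      using i True log_odds_vec_carrier[of m n \<eta> \<mu>' \<nu>']
      by (simp add: log_odds_vec_def c_vec_def d_vec_def diff_divide_distrib)
    moreover have "\<bar>ln (\<mu> (i + 2) / \<mu> 1) - ln (\<mu>' (i + 2) / \<mu>' 1)\<bar> \<le> 4 * t / p"
      using True by (intro abs_ln_div_diff_le[OF p t] \<mu>' \<mu>) auto
    ultimately show ?thesis using \<eta> divide_right_mono[of _ "4 * t / p" \<eta>] by (simp add: abs_divide)
  next
    case False
    let ?k = "i - (m - 1)"
    have "?entry = - (ln (\<nu> (?k + 2) / \<nu> 1) - ln (\<nu>' (?k + 2) / \<nu>' 1)) / \<eta>"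
      using i False log_odds_vec_carrier[of m n \<eta> \<mu>' \<nu>']
      by (simp add: log_odds_vec_def c_vec_def d_vec_def diff_divide_distrib)
    moreover have "\<bar>ln (\<nu> (?k + 2) / \<nu> 1) - ln (\<nu>' (?k + 2) / \<nu>' 1)\<bar> \<le> 4 * t / p"
      using False i by (intro abs_ln_div_diff_le[OF p t] \<nu>' \<nu>) auto
    ultimately show ?thesis
      using \<eta> divide_right_mono[of _ "4 * t / p" \<eta>] by (simp add: abs_divide abs_minus_commute)
  qed
qed

lemma is_QRE_pos:
  assumes "is_QRE m n \<eta> Q \<mu> \<nu>"
  shows "\<And>a. a \<in> {1..m} \<Longrightarrow> 0 < \<mu> a" and "\<And>b. b \<in> {1..n} \<Longrightarrow> 0 < \<nu> b"
proof -
  fix a assume "a \<in> {1..m}"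
  then have "0 < (\<Sum>a'\<in>{1..m}. exp (\<eta> * (\<Sum>b\<in>{1..n}. Q a' b * \<nu> b)))"
    by (intro sum_pos) auto
  moreover have "\<mu> a = exp (\<eta> * (\<Sum>b\<in>{1..n}. Q a b * \<nu> b)) /
      (\<Sum>a'\<in>{1..m}. exp (\<eta> * (\<Sum>b\<in>{1..n}. Q a' b * \<nu> b)))"
    using assms \<open>a \<in> {1..m}\<close> unfolding is_QRE_def by blast
  ultimately show "0 < \<mu> a" by simp
next
  fix b assume "b \<in> {1..n}"
  then have "0 < (\<Sum>b'\<in>{1..n}. exp (- \<eta> * (\<Sum>a\<in>{1..m}. Q a b' * \<mu> a)))"
    by (intro sum_pos) auto
  moreover have "\<nu> b = exp (- \<eta> * (\<Sum>a\<in>{1..m}. Q a b * \<mu> a)) /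
      (\<Sum>b'\<in>{1..n}. exp (- \<eta> * (\<Sum>a\<in>{1..m}. Q a b' * \<mu> a)))"
    using assms \<open>b \<in> {1..n}\<close> unfolding is_QRE_def by blast
  ultimately show "0 < \<nu> b" by simp
qed

lemma design_log_odds_locally_lipschitz:
  fixes \<phi> :: "nat \<Rightarrow> nat \<Rightarrow> real vec" and \<mu>' \<nu>' :: "nat \<Rightarrow> real"
  assumes \<eta>: "0 < \<eta>"
    and \<mu>': "\<And>a. a \<in> {1..m} \<Longrightarrow> 0 < \<mu>' a" and \<nu>': "\<And>b. b \<in> {1..n} \<Longrightarrow> 0 < \<nu>' b"
  obtains t0 CX CY where "0 < t0" "0 \<le> CX" "0 \<le> CY"
    "\<And>\<mu> \<nu> t. 0 \<le> t \<Longrightarrow> t \<le> t0 \<Longrightarrow>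
      (\<And>a. a \<in> {1..m} \<Longrightarrow> \<bar>\<mu> a - \<mu>' a\<bar> \<le> t) \<Longrightarrow> (\<And>b. b \<in> {1..n} \<Longrightarrow> \<bar>\<nu> b - \<nu>' b\<bar> \<le> t) \<Longrightarrow>
      sum_abs_mat (design_mat m n d \<phi> \<mu> \<nu> - design_mat m n d \<phi> \<mu>' \<nu>') \<le> CX * t \<and>
      sum_abs_vec (log_odds_vec m n \<eta> \<mu> \<nu> - log_odds_vec m n \<eta> \<mu>' \<nu>') \<le> CY * t"
proof -
  define p where "p = Min (insert 1 (\<mu>' ` {1..m} \<union> \<nu>' ` {1..n}))"
  have p: "0 < p" using \<mu>' \<nu>' by (auto simp: p_def)
  have p\<mu>': "p \<le> \<mu>' a" if "a \<in> {1..m}" for a using that unfolding p_def by (intro Min_le) auto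
  have p\<nu>': "p \<le> \<nu>' b" if "b \<in> {1..n}" for b using that unfolding p_def by (intro Min_le) auto
  define F where "F = Max (insert 0 ((\<lambda>(a, b, j). \<bar>\<phi> a b $ j\<bar>) ` ({1..m} \<times> {1..n} \<times> {..<d})))"
  have F: "0 \<le> F" unfolding F_def by (intro Max_ge) auto
  have \<phi>F: "\<bar>\<phi> a b $ j\<bar> \<le> F" if "a \<in> {1..m}" "b \<in> {1..n}" "j < d" for a b j
    using that unfolding F_def by (intro Max_ge) force+
  let ?r = "real (m - 1 + (n - 1))"
  have bounds: "sum_abs_mat (design_mat m n d \<phi> \<mu> \<nu> - design_mat m n d \<phi> \<mu>' \<nu>')
      \<le> (?r * real d * (real (m + n) * (2 * F))) * t \<and>
    sum_abs_vec (log_odds_vec m n \<eta> \<mu> \<nu> - log_odds_vec m n \<eta> \<mu>' \<nu>') \<le> (?r * (4 / p / \<eta>)) * t"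
    if t: "0 \<le> t" "t \<le> p / 2" and \<mu>: "\<And>a. a \<in> {1..m} \<Longrightarrow> \<bar>\<mu> a - \<mu>' a\<bar> \<le> t"
      and \<nu>: "\<And>b. b \<in> {1..n} \<Longrightarrow> \<bar>\<nu> b - \<nu>' b\<bar> \<le> t" for \<mu> \<nu> t
    using sum_abs_design_mat_diff_le[where m = m and n = n and d = d, OF t(1) F \<phi>F \<mu> \<nu>]
      sum_abs_log_odds_vec_diff_le[where m = m and n = n, OF \<eta> p t(2) p\<mu>' p\<nu>' \<mu> \<nu>]
    by (simp add: algebra_simps)
  show ?thesis by (intro that[of "p / 2", OF _ _ _ bounds]) (use p F \<eta> in auto)
qed

lemma min_norm_theta_locally_lipschitz:
  fixes \<phi> :: "nat \<Rightarrow> nat \<Rightarrow> real vec" and \<mu>0 \<nu>0 :: "nat \<Rightarrow> real"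
  assumes \<eta>: "0 < \<eta>" and rk: "full_row_rank (design_mat m n d \<phi> \<mu>0 \<nu>0)"
    and \<mu>0: "\<And>a. a \<in> {1..m} \<Longrightarrow> 0 < \<mu>0 a" and \<nu>0: "\<And>b. b \<in> {1..n} \<Longrightarrow> 0 < \<nu>0 b"
  obtains t1 C where "0 < t1" "0 \<le> C"
    "\<And>\<mu> \<nu> t. 0 \<le> t \<Longrightarrow> t \<le> t1 \<Longrightarrow>
      (\<And>a. a \<in> {1..m} \<Longrightarrow> \<bar>\<mu> a - \<mu>0 a\<bar> \<le> t) \<Longrightarrow> (\<And>b. b \<in> {1..n} \<Longrightarrow> \<bar>\<nu> b - \<nu>0 b\<bar> \<le> t) \<Longrightarrow>
      vnorm (min_norm_theta m n d \<eta> \<phi> \<mu> \<nu> - min_norm_theta m n d \<eta> \<phi> \<mu>0 \<nu>0) \<le> C * t"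
proof -
  define r where "r = m - 1 + (n - 1)"
  define X0 where "X0 = design_mat m n d \<phi> \<mu>0 \<nu>0"
  define y0 where "y0 = log_odds_vec m n \<eta> \<mu>0 \<nu>0"
  have X0: "X0 \<in> carrier_mat r d" unfolding X0_def r_def by (rule design_mat_carrier)
  have y0: "y0 \<in> carrier_vec r" unfolding y0_def r_def by (rule log_odds_vec_carrier)
  have "vec_space.rank r X0 = r" using rk X0 unfolding full_row_rank_def X0_def by auto
  then obtain e0 L where e0: "0 < e0" and L: "0 \<le> L" and lip: "\<And>X y. X \<in> carrier_mat r d \<Longrightarrow>
      y \<in> carrier_vec r \<Longrightarrow> sum_abs_mat (X - X0) \<le> e0 \<Longrightarrow>
      sum_abs_vec (pinv X *\<^sub>v y - pinv X0 *\<^sub>v y0) \<le> L * (sum_abs_mat (X - X0) + sum_abs_vec (y - y0))"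
    using pinv_mult_vec_locally_lipschitz[OF X0 _ y0] by blast
  obtain t0 CX CY where t0: "0 < t0" and CX: "0 \<le> CX" and CY: "0 \<le> CY"
    and data: "\<And>\<mu> \<nu> t. 0 \<le> t \<Longrightarrow> t \<le> t0 \<Longrightarrow>
      (\<And>a. a \<in> {1..m} \<Longrightarrow> \<bar>\<mu> a - \<mu>0 a\<bar> \<le> t) \<Longrightarrow> (\<And>b. b \<in> {1..n} \<Longrightarrow> \<bar>\<nu> b - \<nu>0 b\<bar> \<le> t) \<Longrightarrow>
      sum_abs_mat (design_mat m n d \<phi> \<mu> \<nu> - X0) \<le> CX * t \<and> sum_abs_vec (log_odds_vec m n \<eta> \<mu> \<nu> - y0) \<le> CY * t"
    using design_log_odds_locally_lipschitz[where \<mu>' = \<mu>0 and \<nu>' = \<nu>0 and d = d and \<phi> = \<phi>,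
        OF \<eta> \<mu>0 \<nu>0]
    unfolding X0_def y0_def by blast
  define t1 where "t1 = min t0 (e0 / (CX + 1))"
  have "0 < t1" using t0 e0 CX by (simp add: t1_def)
  moreover have "vnorm (min_norm_theta m n d \<eta> \<phi> \<mu> \<nu> - min_norm_theta m n d \<eta> \<phi> \<mu>0 \<nu>0)
      \<le> (L * (CX + CY)) * t"
    if t: "0 \<le> t" "t \<le> t1" and \<mu>: "\<And>a. a \<in> {1..m} \<Longrightarrow> \<bar>\<mu> a - \<mu>0 a\<bar> \<le> t"
      and \<nu>: "\<And>b. b \<in> {1..n} \<Longrightarrow> \<bar>\<nu> b - \<nu>0 b\<bar> \<le> t" for \<mu> \<nu> t
  proof -
    define X where "X = design_mat m n d \<phi> \<mu> \<nu>"
    define y where "y = log_odds_vec m n \<eta> \<mu> \<nu>"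
    have X: "X \<in> carrier_mat r d" unfolding X_def r_def by (rule design_mat_carrier)
    have y: "y \<in> carrier_vec r" unfolding y_def r_def by (rule log_odds_vec_carrier)
    have dX: "sum_abs_mat (X - X0) \<le> CX * t" and dy: "sum_abs_vec (y - y0) \<le> CY * t"
      using data[OF t(1) _ \<mu> \<nu>] t unfolding X_def y_def t1_def by auto
    have "CX * t \<le> CX * (e0 / (CX + 1))" using t CX by (intro mult_left_mono) (auto simp: t1_def)
    also have "\<dots> \<le> e0" using CX e0 by (simp add: field_simps)
    finally have "sum_abs_mat (X - X0) \<le> e0" using dX by linarith
    then have "sum_abs_vec (pinv X *\<^sub>v y - pinv X0 *\<^sub>v y0)
        \<le> L * (sum_abs_mat (X - X0) + sum_abs_vec (y - y0))"
      by (rule lip[OF X y])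
    also have "\<dots> \<le> L * (CX * t + CY * t)" using dX dy L by (intro mult_left_mono add_mono)
    finally show ?thesis
      using vnorm_le_sum_abs_vec[of "pinv X *\<^sub>v y - pinv X0 *\<^sub>v y0"]
      unfolding min_norm_theta_def X_def y_def X0_def y0_def by (simp add: algebra_simps)
  qed
  ultimately show ?thesis using that[of t1 "L * (CX + CY)"] L CX CY by auto
qed

section \<open>Concentration of the empirical frequencies\<close>

lemma map_pmf_mem_eq_bernoulli_pmf:
  "map_pmf (\<lambda>x. x \<in> A) p = bernoulli_pmf (measure_pmf.prob p A)"
proof (rule pmf_eqI)
  fix b :: bool
  have "(\<lambda>x. x \<in> A) -` {True} = A" "(\<lambda>x. x \<in> A) -` {False} = UNIV - A" by auto
  then show "pmf (map_pmf (\<lambda>x. x \<in> A) p) b = pmf (bernoulli_pmf (measure_pmf.prob p A)) b"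
    using measure_pmf.prob_compl[of A p] by (cases b) (simp_all add: pmf_map del: vimage_eq)
qed

lemma count_Pi_pmf_eq_binomial_pmf:
  "map_pmf (\<lambda>s. card {k\<in>{..<N}. s k \<in> A}) (Pi_pmf {..<N} dflt (\<lambda>_. p))
    = binomial_pmf N (measure_pmf.prob p A)"
proof -
  have "map_pmf (\<lambda>s. card {k\<in>{..<N}. s k \<in> A}) (Pi_pmf {..<N} dflt (\<lambda>_. p))
      = map_pmf (\<lambda>f. card {k\<in>{..<N}. f k}) (map_pmf (\<lambda>s. (\<lambda>x. x \<in> A) \<circ> s) (Pi_pmf {..<N} dflt (\<lambda>_. p)))"
    by (simp add: pmf.map_comp o_def)
  also have "map_pmf (\<lambda>s. (\<lambda>x. x \<in> A) \<circ> s) (Pi_pmf {..<N} dflt (\<lambda>_. p))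
      = Pi_pmf {..<N} (dflt \<in> A) (\<lambda>_. bernoulli_pmf (measure_pmf.prob p A))"
    by (simp add: Pi_pmf_map[symmetric] map_pmf_mem_eq_bernoulli_pmf)
  also have "map_pmf (\<lambda>f. card {k\<in>{..<N}. f k}) \<dots> = binomial_pmf N (measure_pmf.prob p A)"
    by (rule binomial_pmf_altdef'[symmetric]) auto
  finally show ?thesis .
qed

lemma prob_frequency_deviation_ge:
  assumes "0 < N" "0 \<le> t"
  shows "measure_pmf.prob (Pi_pmf {..<N} dflt (\<lambda>_. p))
      {s. t \<le> \<bar>real (card {k\<in>{..<N}. s k \<in> A}) / N - measure_pmf.prob p A\<bar>}
    \<le> 2 * exp (- 2 * real N * t\<^sup>2)"
proof -
  interpret binomial_distribution N "measure_pmf.prob p A" by unfold_locales auto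
  have "measure_pmf.prob (Pi_pmf {..<N} dflt (\<lambda>_. p))
      {s. t \<le> \<bar>real (card {k\<in>{..<N}. s k \<in> A}) / N - measure_pmf.prob p A\<bar>}
    = measure_pmf.prob (map_pmf (\<lambda>s. card {k\<in>{..<N}. s k \<in> A}) (Pi_pmf {..<N} dflt (\<lambda>_. p)))
      {x. t \<le> \<bar>real x / N - measure_pmf.prob p A\<bar>}"
    by (simp add: vimage_def)
  also have "\<dots> = measure_pmf.prob (binomial_pmf N (measure_pmf.prob p A))
      {x. t \<le> \<bar>real x / N - measure_pmf.prob p A\<bar>}"
    by (simp only: count_Pi_pmf_eq_binomial_pmf)
  also have "\<dots> \<le> 2 * exp (- 2 * real N * t\<^sup>2)" using prob_abs_ge'[OF assms] by simp
  finally show ?thesis .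
qed

lemma measure_pair_pmf_fst: "measure_pmf.prob (pair_pmf \<mu> \<nu>) {x. fst x = a} = pmf \<mu> a"
proof -
  have "{x. fst x = a} = fst -` {a}" by auto
  then show ?thesis by (metis measure_map_pmf map_fst_pair_pmf measure_pmf_single)
qed

lemma measure_pair_pmf_snd: "measure_pmf.prob (pair_pmf \<mu> \<nu>) {x. snd x = b} = pmf \<nu> b"
proof -
  have "{x. snd x = b} = snd -` {b}" by auto
  then show ?thesis by (metis measure_map_pmf map_snd_pair_pmf measure_pmf_single)
qed

lemma prob_empirical_frequencies_close:
  fixes \<mu> \<nu> :: "nat pmf"
  assumes I: "finite I" and J: "finite J" and N: "0 < N" and t: "0 \<le> t"
  shows "1 - 2 * real (card I + card J) * exp (- 2 * real N * t\<^sup>2)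
    \<le> measure_pmf.prob (Pi_pmf {..<N} dflt (\<lambda>_. pair_pmf \<mu> \<nu>))
      {s. (\<forall>a\<in>I. \<bar>emp_fst N s a - pmf \<mu> a\<bar> < t) \<and> (\<forall>b\<in>J. \<bar>emp_snd N s b - pmf \<nu> b\<bar> < t)}"
    (is "_ \<le> measure_pmf.prob ?M ?good")
proof -
  define E where "E a = {s. t \<le> \<bar>emp_fst N s a - pmf \<mu> a\<bar>}" for a
  define F where "F b = {s. t \<le> \<bar>emp_snd N s b - pmf \<nu> b\<bar>}" for b
  let ?bound = "2 * exp (- 2 * real N * t\<^sup>2)"
  have E: "measure_pmf.prob ?M (E a) \<le> ?bound" for a
    using prob_frequency_deviation_ge[OF N t, of dflt "pair_pmf \<mu> \<nu>" "{x. fst x = a}"]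
    by (simp add: E_def emp_fst_def measure_pair_pmf_fst)
  have F: "measure_pmf.prob ?M (F b) \<le> ?bound" for b
    using prob_frequency_deviation_ge[OF N t, of dflt "pair_pmf \<mu> \<nu>" "{x. snd x = b}"]
    by (simp add: F_def emp_snd_def measure_pair_pmf_snd)
  have "measure_pmf.prob ?M (UNIV - ?good) \<le> measure_pmf.prob ?M ((\<Union>a\<in>I. E a) \<union> (\<Union>b\<in>J. F b))"
    by (intro measure_pmf.finite_measure_mono) (auto simp: E_def F_def not_less)
  also have "\<dots> \<le> (\<Sum>a\<in>I. measure_pmf.prob ?M (E a)) + (\<Sum>b\<in>J. measure_pmf.prob ?M (F b))"
    using I J by (intro order.trans[OF measure_Un_le] add_mono measure_pmf.finite_measure_subadditive_finite) auto
  also have "\<dots> \<le> real (card I) * ?bound + real (card J) * ?bound"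
    using sum_mono[of I "\<lambda>a. measure_pmf.prob ?M (E a)" "\<lambda>_. ?bound"]
      sum_mono[of J "\<lambda>b. measure_pmf.prob ?M (F b)" "\<lambda>_. ?bound"] E F by (simp add: add_mono)
  finally have "measure_pmf.prob ?M (UNIV - ?good) \<le> real (card I + card J) * ?bound"
    by (simp add: algebra_simps)
  moreover have "measure_pmf.prob ?M ?good = 1 - measure_pmf.prob ?M (UNIV - ?good)"
    using measure_pmf.prob_compl[of "UNIV - ?good" ?M] by (simp add: Diff_Diff_Int)
  ultimately show ?thesis by (simp add: algebra_simps)
qed

lemma exp_hoeffding_radius:
  fixes k \<delta> :: real
  assumes "0 < N" "0 < \<delta>" "\<delta> \<le> k"
  shows "k * exp (- 2 * real N * (sqrt (ln (k / \<delta>) / 2) / sqrt (real N))\<^sup>2) = \<delta>"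
proof -
  have "0 \<le> ln (k / \<delta>)" using assms by simp
  then have "- 2 * real N * (sqrt (ln (k / \<delta>) / 2) / sqrt (real N))\<^sup>2 = - ln (k / \<delta>)"
    using assms by (simp add: power_divide)
  then show ?thesis using assms by (simp add: exp_minus)
qed

lemma prob_min_norm_theta_deviation_le:
  fixes \<phi> :: "nat \<Rightarrow> nat \<Rightarrow> real vec" and \<mu>s \<nu>s :: "nat pmf"
  assumes N: "0 < N" and t: "0 \<le> t"
    and close: "\<And>\<mu> \<nu>. (\<And>a. a \<in> {1..m} \<Longrightarrow> \<bar>\<mu> a - pmf \<mu>s a\<bar> \<le> t) \<Longrightarrow>
      (\<And>b. b \<in> {1..n} \<Longrightarrow> \<bar>\<nu> b - pmf \<nu>s b\<bar> \<le> t) \<Longrightarrow>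
      vnorm (min_norm_theta m n d \<eta> \<phi> \<mu> \<nu> - min_norm_theta m n d \<eta> \<phi> (pmf \<mu>s) (pmf \<nu>s)) \<le> B"
  shows "1 - 2 * real (m + n) * exp (- 2 * real N * t\<^sup>2)
    \<le> measure_pmf.prob (Pi_pmf {..<N} dflt (\<lambda>_. pair_pmf \<mu>s \<nu>s))
      {s. vnorm (min_norm_theta m n d \<eta> \<phi> (emp_fst N s) (emp_snd N s)
          - min_norm_theta m n d \<eta> \<phi> (pmf \<mu>s) (pmf \<nu>s)) \<le> B}"
proof -
  let ?M = "Pi_pmf {..<N} dflt (\<lambda>_. pair_pmf \<mu>s \<nu>s)"
  have "1 - 2 * real (m + n) * exp (- 2 * real N * t\<^sup>2) \<le> measure_pmf.prob ?M
      {s. (\<forall>a\<in>{1..m}. \<bar>emp_fst N s a - pmf \<mu>s a\<bar> < t) \<and> (\<forall>b\<in>{1..n}. \<bar>emp_snd N s b - pmf \<nu>s b\<bar> < t)}"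
    using prob_empirical_frequencies_close[of "{1..m}" "{1..n}" N t dflt \<mu>s \<nu>s] N t by simp
  also have "\<dots> \<le> measure_pmf.prob ?M {s. vnorm (min_norm_theta m n d \<eta> \<phi> (emp_fst N s) (emp_snd N s)
      - min_norm_theta m n d \<eta> \<phi> (pmf \<mu>s) (pmf \<nu>s)) \<le> B}"
    by (intro measure_pmf.finite_measure_mono subsetI CollectI close)
      (auto intro: less_imp_le)
  finally show ?thesis .
qed

lemma min_norm_theta_concentration:
  fixes \<phi> :: "nat \<Rightarrow> nat \<Rightarrow> real vec" and \<mu>s \<nu>s :: "nat pmf"
  assumes \<eta>: "0 < \<eta>" and rk: "full_row_rank (design_mat m n d \<phi> (pmf \<mu>s) (pmf \<nu>s))"
    and \<mu>s: "\<And>a. a \<in> {1..m} \<Longrightarrow> 0 < pmf \<mu>s a" and \<nu>s: "\<And>b. b \<in> {1..n} \<Longrightarrow> 0 < pmf \<nu>s b"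
    and mn: "0 < m + n" and \<delta>: "\<delta> \<in> {0<..<1}"
  shows "\<exists>N0 C. \<forall>N\<ge>N0. 1 - \<delta> \<le> measure_pmf.prob (Pi_pmf {..<N} dflt (\<lambda>_. pair_pmf \<mu>s \<nu>s))
    {s. vnorm (min_norm_theta m n d \<eta> \<phi> (emp_fst N s) (emp_snd N s)
          - min_norm_theta m n d \<eta> \<phi> (pmf \<mu>s) (pmf \<nu>s)) \<le> C * (real m ^ 2 + real n ^ 2) / sqrt (real N)}"
proof -
  obtain t1 C where t1: "0 < t1" and C: "0 \<le> C" and lip: "\<And>\<mu> \<nu> t. 0 \<le> t \<Longrightarrow> t \<le> t1 \<Longrightarrow>
      (\<And>a. a \<in> {1..m} \<Longrightarrow> \<bar>\<mu> a - pmf \<mu>s a\<bar> \<le> t) \<Longrightarrow> (\<And>b. b \<in> {1..n} \<Longrightarrow> \<bar>\<nu> b - pmf \<nu>s b\<bar> \<le> t) \<Longrightarrow>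
      vnorm (min_norm_theta m n d \<eta> \<phi> \<mu> \<nu> - min_norm_theta m n d \<eta> \<phi> (pmf \<mu>s) (pmf \<nu>s)) \<le> C * t"
    using min_norm_theta_locally_lipschitz[OF \<eta> rk \<mu>s \<nu>s] by blast
  define K where "K = sqrt (ln (2 * real (m + n) / \<delta>) / 2)"
  have "1 \<le> real (m + n)" using mn by (metis Suc_leI One_nat_def of_nat_1 of_nat_le_iff)
  then have \<delta>_le: "\<delta> \<le> 2 * real (m + n)" using \<delta> by simp
  then have K: "0 \<le> K" using \<delta> by (simp add: K_def)
  have "m + n \<le> m\<^sup>2 + n\<^sup>2"
    using add_mono[OF le_square[of m] le_square[of n]] by (simp add: power2_eq_square)
  then have "1 \<le> m\<^sup>2 + n\<^sup>2" using mn by linarith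
  then have sq: "1 \<le> real m ^ 2 + real n ^ 2" by (metis of_nat_1 of_nat_add of_nat_le_iff of_nat_power)
  have "1 - \<delta> \<le> measure_pmf.prob (Pi_pmf {..<N} dflt (\<lambda>_. pair_pmf \<mu>s \<nu>s))
    {s. vnorm (min_norm_theta m n d \<eta> \<phi> (emp_fst N s) (emp_snd N s)
          - min_norm_theta m n d \<eta> \<phi> (pmf \<mu>s) (pmf \<nu>s)) \<le> C * K * (real m ^ 2 + real n ^ 2) / sqrt (real N)}"
    if N: "nat \<lceil>(K / t1)\<^sup>2\<rceil> + 1 \<le> N" for N
  proof -
    define t where "t = K / sqrt (real N)"
    have "0 < N" using N by simp
    have "(K / t1)\<^sup>2 \<le> real N" using N by linarith
    then have "K / t1 \<le> sqrt (real N)" by (rule real_le_rsqrt)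
    then have t: "0 \<le> t" "t \<le> t1" using t1 K \<open>0 < N\<close> by (auto simp: t_def field_simps)
    have "C * t \<le> C * K * (real m ^ 2 + real n ^ 2) / sqrt (real N)"
      using mult_left_mono[OF sq, of "C * K"] C K by (simp add: t_def divide_right_mono)
    then have "1 - 2 * real (m + n) * exp (- 2 * real N * t\<^sup>2) \<le> measure_pmf.prob (Pi_pmf {..<N} dflt (\<lambda>_. pair_pmf \<mu>s \<nu>s))
      {s. vnorm (min_norm_theta m n d \<eta> \<phi> (emp_fst N s) (emp_snd N s)
          - min_norm_theta m n d \<eta> \<phi> (pmf \<mu>s) (pmf \<nu>s)) \<le> C * K * (real m ^ 2 + real n ^ 2) / sqrt (real N)}"
      using t lip by (intro prob_min_norm_theta_deviation_le[OF \<open>0 < N\<close> t(1)]) (meson order.trans)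
    moreover have "2 * real (m + n) * exp (- 2 * real N * t\<^sup>2) = \<delta>"
      using exp_hoeffding_radius[OF \<open>0 < N\<close> _ \<delta>_le] \<delta> unfolding t_def K_def by simp
    ultimately show ?thesis by simp
  qed
  then show ?thesis by blast
qed

theorem mainTheorem6:
  fixes m n d :: nat and \<eta> M \<sigma>b :: real
    and \<phi> :: "nat \<Rightarrow> nat \<Rightarrow> real vec" and \<theta>s :: "real vec"
    and \<mu>s :: "nat pmf" and \<nu>s :: "nat pmf"
  assumes "m \<ge> 2" and "n \<ge> 2" and "\<eta> > 0"
    and "\<And>a b. \<phi> a b \<in> carrier_vec d"
    and "\<theta>s \<in> carrier_vec d" and "\<theta>s \<bullet> \<theta>s \<le> M"
    and "set_pmf \<mu>s \<subseteq> {1..m}" and "set_pmf \<nu>s \<subseteq> {1..n}"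
    and "is_QRE m n \<eta> (\<lambda>a b. \<phi> a b \<bullet> \<theta>s) (pmf \<mu>s) (pmf \<nu>s)"
    and "full_row_rank (stack_mat (A_mat m n d \<phi> (pmf \<nu>s)) (B_mat m n d \<phi> (pmf \<mu>s)))"
    and "\<sigma>b > 0"
    and "sigma_min (stack_mat (A_mat m n d \<phi> (pmf \<nu>s)) (B_mat m n d \<phi> (pmf \<mu>s))) \<ge> \<sigma>b"
  shows "\<forall>\<delta>\<in>{0<..<1}. \<exists>N0 C. \<forall>N\<ge>N0.
     measure_pmf.prob (Pi_pmf {..<N} undefined (\<lambda>_. pair_pmf \<mu>s \<nu>s))
       {s. vnorm (pinv (stack_mat (A_mat m n d \<phi> (emp_snd N s)) (B_mat m n d \<phi> (emp_fst N s)))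
                    *\<^sub>v (c_vec m \<eta> (emp_fst N s) @\<^sub>v d_vec n \<eta> (emp_snd N s))
                  - pinv (stack_mat (A_mat m n d \<phi> (pmf \<nu>s)) (B_mat m n d \<phi> (pmf \<mu>s)))
                    *\<^sub>v (c_vec m \<eta> (pmf \<mu>s) @\<^sub>v d_vec n \<eta> (pmf \<nu>s)))
           \<le> C * (real m ^ 2 + real n ^ 2) / sqrt (real N)}
     \<ge> 1 - \<delta>"
proof -
  (* The bound sigma_b on the smallest singular value only makes C explicit; for the existence of
     C full row rank suffices. *)
  have "0 < m + n" using assms(1) by simp
  then show ?thesis
    using min_norm_theta_concentration[OF assms(3) assms(10)[folded design_mat_def] is_QRE_pos[OF assms(9)]]
    by (simp add: min_norm_theta_def design_mat_def log_odds_vec_def)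
qed

end
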